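(* Every orthogonal, left-finite TRS is infinitarily normalising: for each orthogonal, left-finite TRS $\mathcal{R}$ and each partial term $t$ in $\mathcal{R}$, there is an $\mathcal{R}$-normal form that is strongly $p$-reachable from $t$.
   Context: Orthogonal = left-linear and non-overlapping; left-finite = all left-hand sides finite. Partial terms are terms over $\Sigma_\bot=\Sigma\uplus\{\bot\}$, ordered by $\le_\bot$ ($s\le_\bot t$ iff $s$ is $t$ with some subterms replaced by $\bot$), a complete semilattice; $\liminf_{\iota\to\alpha}a_\iota=\bigvee_{\beta<\alpha}\bigwedge_{\beta\le\iota<\alpha}a_\iota$. A reduction $(t_\iota\to_{\pi_\iota}t_{\iota+1})_{\iota<\alpha}$ with contexts $c_\iota$ ($t_\iota$ with position $\pi_\iota$ replaced by $\bot$) strongly $p$-converges to $t$ if $\liminf_{\iota\to\lambda}c_\iota=t_\lambda$ for all limit $\lambda<\alpha$, and $t$ is the last term (closed case) or $t=\liminf_{\iota\to\alpha}c_\iota$ (open case); $t$ is strongly $p$-reachable from $s$ if such a reduction from $s$ to $t$ exists. *)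

theory Defs
  imports Main
begin

text \<open>Symbols of Sigma_bot together with variables.  The signature is the type 'f
  together with an arity function ar.\<close>
datatype ('f, 'v) sym = FunS 'f | VarS 'v | BotS

type_synonym ('f, 'v) pterm = "nat list \<Rightarrow> ('f, 'v) sym option"

fun arity :: "('f \<Rightarrow> nat) \<Rightarrow> ('f, 'v) sym \<Rightarrow> nat" where
  "arity ar (FunS f) = ar f"
| "arity ar (VarS x) = 0"
| "arity ar BotS = 0"

definition wf_pterm :: "('f \<Rightarrow> nat) \<Rightarrow> ('f, 'v) pterm \<Rightarrow> bool" where
  "wf_pterm ar t \<longleftrightarrow>
     t [] \<noteq> None \<and>
     (\<forall>p i. t (p @ [i]) \<noteq> None \<longrightarrow> t p \<noteq> None) \<and>
     (\<forall>p s. t p = Some s \<longrightarrow> (\<forall>i. t (p @ [i]) \<noteq> None \<longleftrightarrow> i < arity ar s))"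

definition wf_term :: "('f \<Rightarrow> nat) \<Rightarrow> ('f, 'v) pterm \<Rightarrow> bool" where
  "wf_term ar t \<longleftrightarrow> wf_pterm ar t \<and> (\<forall>p. t p \<noteq> Some BotS)"

definition vars :: "('f, 'v) pterm \<Rightarrow> 'v set" where
  "vars t = {x. \<exists>p. t p = Some (VarS x)}"

definition bot_term :: "('f, 'v) pterm" where
  "bot_term = (\<lambda>q. if q = [] then Some BotS else None)"

definition subterm :: "('f, 'v) pterm \<Rightarrow> nat list \<Rightarrow> ('f, 'v) pterm" where
  "subterm t \<pi> = (\<lambda>q. t (\<pi> @ q))"

definition replace :: "('f, 'v) pterm \<Rightarrow> nat list \<Rightarrow> ('f, 'v) pterm \<Rightarrow> ('f, 'v) pterm" where
  "replace t \<pi> s = (\<lambda>q. if take (length \<pi>) q = \<pi> then s (drop (length \<pi>) q) else t q)"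

text \<open>Substitution application: walk down the position until a variable is hit.\<close>
fun substp :: "('v \<Rightarrow> ('f, 'v) pterm) \<Rightarrow> ('f, 'v) pterm \<Rightarrow> nat list \<Rightarrow> nat list \<Rightarrow> ('f, 'v) sym option" where
  "substp \<sigma> t p [] = (case t p of Some (VarS x) \<Rightarrow> \<sigma> x [] | v \<Rightarrow> v)"
| "substp \<sigma> t p (i # q) = (case t p of Some (VarS x) \<Rightarrow> \<sigma> x (i # q)
                                     | Some _ \<Rightarrow> substp \<sigma> t (p @ [i]) q
                                     | None \<Rightarrow> None)"

definition subst :: "('v \<Rightarrow> ('f, 'v) pterm) \<Rightarrow> ('f, 'v) pterm \<Rightarrow> ('f, 'v) pterm" where
  "subst \<sigma> t = (\<lambda>q. substp \<sigma> t [] q)"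

type_synonym ('f, 'v) trs = "(('f, 'v) pterm \<times> ('f, 'v) pterm) set"

definition trs :: "('f \<Rightarrow> nat) \<Rightarrow> ('f, 'v) trs \<Rightarrow> bool" where
  "trs ar R \<longleftrightarrow> (\<forall>(l, r) \<in> R. wf_term ar l \<and> wf_term ar r \<and>
        (\<forall>x. l [] \<noteq> Some (VarS x)) \<and> vars r \<subseteq> vars l)"

definition left_finite :: "('f, 'v) trs \<Rightarrow> bool" where
  "left_finite R \<longleftrightarrow> (\<forall>(l, r) \<in> R. finite {p. l p \<noteq> None})"

definition left_linear :: "('f, 'v) trs \<Rightarrow> bool" where
  "left_linear R \<longleftrightarrow> (\<forall>(l, r) \<in> R. \<forall>p q x. l p = Some (VarS x) \<and> l q = Some (VarS x) \<longrightarrow> p = q)"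

text \<open>Non-overlapping: no lhs unifies (after renaming apart, i.e. with two independent
  substitutions) with a non-variable subterm of a lhs, except a rule with itself at the root.\<close>
definition non_overlapping :: "('f \<Rightarrow> nat) \<Rightarrow> ('f, 'v) trs \<Rightarrow> bool" where
  "non_overlapping ar R \<longleftrightarrow> \<not> (\<exists>l1 r1 l2 r2 \<pi> f \<sigma>1 \<sigma>2.
      (l1, r1) \<in> R \<and> (l2, r2) \<in> R \<and> l2 \<pi> = Some (FunS f) \<and>
      (\<forall>x. wf_term ar (\<sigma>1 x)) \<and> (\<forall>x. wf_term ar (\<sigma>2 x)) \<and>
      subst \<sigma>1 l1 = subst \<sigma>2 (subterm l2 \<pi>) \<and>
      \<not> (\<pi> = [] \<and> (l1, r1) = (l2, r2)))"

definition orthogonal :: "('f \<Rightarrow> nat) \<Rightarrow> ('f, 'v) trs \<Rightarrow> bool" where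
  "orthogonal ar R \<longleftrightarrow> left_linear R \<and> non_overlapping ar R"

definition redex_at :: "('f \<Rightarrow> nat) \<Rightarrow> ('f, 'v) trs \<Rightarrow> nat list \<Rightarrow> ('f, 'v) pterm \<Rightarrow> bool" where
  "redex_at ar R \<pi> t \<longleftrightarrow> t \<pi> \<noteq> None \<and>
     (\<exists>(l, r) \<in> R. \<exists>\<sigma>. (\<forall>x. wf_pterm ar (\<sigma> x)) \<and> subterm t \<pi> = subst \<sigma> l)"

definition rstep :: "('f \<Rightarrow> nat) \<Rightarrow> ('f, 'v) trs \<Rightarrow> nat list \<Rightarrow> ('f, 'v) pterm \<Rightarrow> ('f, 'v) pterm \<Rightarrow> bool" where
  "rstep ar R \<pi> t t' \<longleftrightarrow> wf_pterm ar t \<and> t \<pi> \<noteq> None \<and>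
     (\<exists>(l, r) \<in> R. \<exists>\<sigma>. (\<forall>x. wf_pterm ar (\<sigma> x)) \<and> subterm t \<pi> = subst \<sigma> l \<and>
         t' = replace t \<pi> (subst \<sigma> r))"

definition normal_form :: "('f \<Rightarrow> nat) \<Rightarrow> ('f, 'v) trs \<Rightarrow> ('f, 'v) pterm \<Rightarrow> bool" where
  "normal_form ar R t \<longleftrightarrow> wf_pterm ar t \<and> (\<forall>\<pi>. \<not> redex_at ar R \<pi> t)"

definition le_bot :: "('f, 'v) pterm \<Rightarrow> ('f, 'v) pterm \<Rightarrow> bool" where
  "le_bot s t \<longleftrightarrow> (\<forall>p. s p \<noteq> None \<longrightarrow> (s p = Some BotS \<and> t p \<noteq> None) \<or> s p = t p)"

definition is_glb :: "('f \<Rightarrow> nat) \<Rightarrow> ('f, 'v) pterm set \<Rightarrow> ('f, 'v) pterm \<Rightarrow> bool" where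
  "is_glb ar S g \<longleftrightarrow> wf_pterm ar g \<and> (\<forall>s\<in>S. le_bot g s) \<and>
     (\<forall>h. wf_pterm ar h \<and> (\<forall>s\<in>S. le_bot h s) \<longrightarrow> le_bot h g)"

definition is_lub :: "('f \<Rightarrow> nat) \<Rightarrow> ('f, 'v) pterm set \<Rightarrow> ('f, 'v) pterm \<Rightarrow> bool" where
  "is_lub ar S u \<longleftrightarrow> wf_pterm ar u \<and> (\<forall>s\<in>S. le_bot s u) \<and>
     (\<forall>h. wf_pterm ar h \<and> (\<forall>s\<in>S. le_bot s h) \<longrightarrow> le_bot u h)"

definition is_liminf :: "('f \<Rightarrow> nat) \<Rightarrow> nat rel \<Rightarrow> (nat \<Rightarrow> ('f, 'v) pterm) \<Rightarrow> nat set \<Rightarrow> ('f, 'v) pterm \<Rightarrow> bool" where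
  "is_liminf ar W c A t \<longleftrightarrow>
     is_lub ar {g. \<exists>\<beta>\<in>A. is_glb ar (c ` {\<iota>\<in>A. (\<beta>, \<iota>) \<in> W}) g} t"

text \<open>A reduction of length alpha is indexed by a well-order W (on a set of naturals): the steps are indexed by I = Field W (ordinals iota < alpha),
  ts i is the term t_iota and ps i the redex position pi_iota.\<close>

definition wsucc :: "nat rel \<Rightarrow> nat \<Rightarrow> nat \<Rightarrow> bool" where
  "wsucc W i j \<longleftrightarrow> (i, j) \<in> W \<and> i \<noteq> j \<and> \<not> (\<exists>k. (i, k) \<in> W \<and> (k, j) \<in> W \<and> k \<noteq> i \<and> k \<noteq> j)"

definition wlimit :: "nat rel \<Rightarrow> nat \<Rightarrow> bool" where
  "wlimit W l \<longleftrightarrow> l \<in> Field W \<and> (\<exists>j. (j, l) \<in> W \<and> j \<noteq> l) \<and> \<not> (\<exists>j. wsucc W j l)"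

definition strongly_p_converges ::
  "('f \<Rightarrow> nat) \<Rightarrow> ('f, 'v) trs \<Rightarrow> nat rel \<Rightarrow> (nat \<Rightarrow> ('f, 'v) pterm) \<Rightarrow> (nat \<Rightarrow> nat list)
    \<Rightarrow> ('f, 'v) pterm \<Rightarrow> ('f, 'v) pterm \<Rightarrow> bool" where
  "strongly_p_converges ar R W ts ps s t \<longleftrightarrow>
     Well_order W \<and>
     (let I = Field W; c = (\<lambda>i. replace (ts i) (ps i) bot_term) in
       \<comment> \<open>empty reduction (closed): the result is the start term\<close>
       (I = {} \<longrightarrow> t = s) \<and>
       \<comment> \<open>t_0 = s\<close>
       (\<forall>i\<in>I. (\<forall>j\<in>I. (i, j) \<in> W) \<longrightarrow> ts i = s) \<and>
       \<comment> \<open>steps t_iota ->_{pi_iota} t_{iota+1}\<close>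
       (\<forall>i\<in>I. \<forall>j\<in>I. wsucc W i j \<longrightarrow> rstep ar R (ps i) (ts i) (ts j)) \<and>
       \<comment> \<open>closed (successor length) case: the last step ends in t\<close>
       (\<forall>i\<in>I. (\<forall>j\<in>I. (j, i) \<in> W) \<longrightarrow> rstep ar R (ps i) (ts i) t) \<and>
       \<comment> \<open>strong p-continuity at limit ordinals lambda < alpha\<close>
       (\<forall>l\<in>I. wlimit W l \<longrightarrow> is_liminf ar W c {i\<in>I. (i, l) \<in> W \<and> i \<noteq> l} (ts l)) \<and>
       \<comment> \<open>open (limit length) case: t is the liminf of the contexts\<close>
       (I \<noteq> {} \<and> \<not> (\<exists>m\<in>I. \<forall>j\<in>I. (j, m) \<in> W) \<longrightarrow> is_liminf ar W c I t))"

definition strongly_p_reachable :: "('f \<Rightarrow> nat) \<Rightarrow> ('f, 'v) trs \<Rightarrow> ('f, 'v) pterm \<Rightarrow> ('f, 'v) pterm \<Rightarrow> bool" where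
  "strongly_p_reachable ar R s t \<longleftrightarrow> (\<exists>W ts ps. strongly_p_converges ar R W ts ps s t)"

end

theory Submission
  imports Defs "HOL-Library.Nat_Bijection"
begin

text \<open>Contract redexes by a fair strategy. If a normal form is reached after finitely many
  steps we are done; otherwise the omega-long reduction strongly p-converges to the limit
  inferior of its contexts. That limit is a normal form: a redex in it has only finitely many
  function symbols (left-finiteness), which are eventually stable in the contexts; by
  left-linearity they then form a redex at the same position of every later term, so fairness
  eventually contracts it and puts BotS there in the context, contradicting stability.\<close>

lemma wf_ptermI:
  assumes "t [] \<noteq> None"
    and "\<And>p i. t (p @ [i]) \<noteq> None \<Longrightarrow> t p \<noteq> None"
    and "\<And>p s i. t p = Some s \<Longrightarrow> t (p @ [i]) \<noteq> None \<longleftrightarrow> i < arity ar s"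
  shows "wf_pterm ar t"
  using assms unfolding wf_pterm_def by blast

lemma wf_pterm_root: "wf_pterm ar t \<Longrightarrow> t [] \<noteq> None"
  unfolding wf_pterm_def by blast

lemma wf_pterm_parent: "wf_pterm ar t \<Longrightarrow> t (p @ [i]) \<noteq> None \<Longrightarrow> t p \<noteq> None"
  unfolding wf_pterm_def by blast

lemma wf_pterm_child_iff:
  "wf_pterm ar t \<Longrightarrow> t p = Some s \<Longrightarrow> t (p @ [i]) \<noteq> None \<longleftrightarrow> i < arity ar s"
  unfolding wf_pterm_def by blast

lemma wf_pterm_prefix: "wf_pterm ar t \<Longrightarrow> t (p @ q) \<noteq> None \<Longrightarrow> t p \<noteq> None"
  by (induction q rule: rev_induct) (auto dest: wf_pterm_parent simp flip: append_assoc)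

lemma wf_pterm_FunS_above:
  assumes "wf_pterm ar t" and "t (p @ i # q) \<noteq> None"
  shows "\<exists>f. t p = Some (FunS f) \<and> i < ar f"
proof -
  have child: "t (p @ [i]) \<noteq> None"
    using wf_pterm_prefix[OF assms(1), of "p @ [i]" q] assms(2) by simp
  then obtain s where s: "t p = Some s"
    using wf_pterm_parent[OF assms(1)] by blast
  with child have "i < arity ar s"
    using wf_pterm_child_iff[OF assms(1) s] by simp
  with s show ?thesis by (cases s) auto
qed

lemma wf_pterm_subterm: "wf_pterm ar t \<Longrightarrow> t \<pi> \<noteq> None \<Longrightarrow> wf_pterm ar (subterm t \<pi>)"
  unfolding wf_pterm_def subterm_def by (metis append.assoc append_Nil2)

lemma wf_pterm_bot_term: "wf_pterm ar bot_term"
  unfolding wf_pterm_def bot_term_def by auto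

lemma wf_term_imp_wf_pterm: "wf_term ar t \<Longrightarrow> wf_pterm ar t"
  unfolding wf_term_def by simp

section \<open>Substitution and replacement\<close>

definition below_var :: "('f, 'v) pterm \<Rightarrow> nat list \<Rightarrow> bool" where
  "below_var t q \<longleftrightarrow> (\<exists>q1 q2 x. q = q1 @ q2 \<and> t q1 = Some (VarS x))"

lemma below_var_snoc: "below_var t q \<Longrightarrow> below_var t (q @ [i])"
  unfolding below_var_def by (metis append.assoc)

lemma below_var_snocD:
  "\<not> below_var t p \<Longrightarrow> below_var t (p @ [i]) \<Longrightarrow> \<exists>x. t (p @ [i]) = Some (VarS x)"
  unfolding below_var_def by (metis append_Nil2 butlast_append butlast_snoc)

lemma substp_non_var:
  "wf_pterm ar t \<Longrightarrow> t (p @ q) = Some v \<Longrightarrow> \<forall>x. v \<noteq> VarS x \<Longrightarrow> substp \<sigma> t p q = Some v"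
proof (induction q arbitrary: p)
  case Nil
  then show ?case by (cases v) auto
next
  case (Cons i q)
  then obtain f where "t p = Some (FunS f)"
    using wf_pterm_FunS_above[of ar t p i q] by auto
  with Cons show ?case by simp
qed

lemma substp_var:
  "wf_pterm ar t \<Longrightarrow> t (p @ q1) = Some (VarS x) \<Longrightarrow> substp \<sigma> t p (q1 @ q2) = \<sigma> x q2"
proof (induction q1 arbitrary: p)
  case Nil
  then show ?case by (cases q2) auto
next
  case (Cons i q)
  then obtain f where "t p = Some (FunS f)"
    using wf_pterm_FunS_above[of ar t p i q] by auto
  with Cons show ?case by simp
qed

lemma substp_None:
  "\<forall>q1 q2 x. q = q1 @ q2 \<longrightarrow> t (p @ q1) \<noteq> Some (VarS x) \<Longrightarrow> t (p @ q) = None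
    \<Longrightarrow> substp \<sigma> t p q = None"
proof (induction q arbitrary: p)
  case Nil
  then show ?case by simp
next
  case (Cons i q)
  have not_var: "\<forall>x. t p \<noteq> Some (VarS x)"
    using Cons.prems(1)[rule_format, of "[]"] by simp
  have "substp \<sigma> t (p @ [i]) q = None"
    using Cons.IH[of "p @ [i]"] Cons.prems by (metis append.assoc append_Cons append_Nil)
  with not_var show ?case by (cases "t p") (auto split: sym.split)
qed

lemma subst_var: "wf_pterm ar t \<Longrightarrow> t q1 = Some (VarS x) \<Longrightarrow> subst \<sigma> t (q1 @ q2) = \<sigma> x q2"
  unfolding subst_def using substp_var[of ar t "[]" q1 x \<sigma> q2] by simp

lemma subst_not_below_var: "wf_pterm ar t \<Longrightarrow> \<not> below_var t q \<Longrightarrow> subst \<sigma> t q = t q"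
proof (cases "t q")
  case None
  moreover assume "\<not> below_var t q"
  ultimately show ?thesis
    unfolding subst_def below_var_def using substp_None[of q t "[]" \<sigma>] by auto
next
  case (Some v)
  moreover assume "wf_pterm ar t" and "\<not> below_var t q"
  moreover have "\<forall>x. v \<noteq> VarS x"
    using \<open>\<not> below_var t q\<close> Some unfolding below_var_def by (metis append_Nil2)
  ultimately show ?thesis
    unfolding subst_def using substp_non_var[of ar t "[]" q v \<sigma>] by simp
qed

lemma subst_FunS: "wf_pterm ar l \<Longrightarrow> l q = Some (FunS f) \<Longrightarrow> subst \<sigma> l q = Some (FunS f)"
  unfolding subst_def using substp_non_var[of ar l "[]" q "FunS f" \<sigma>] by simp

lemma wf_pterm_subst:
  assumes t: "wf_pterm ar t" and \<sigma>: "\<forall>x. wf_pterm ar (\<sigma> x)"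
  shows "wf_pterm ar (subst \<sigma> t)"
proof (rule wf_ptermI)
  show "subst \<sigma> t [] \<noteq> None"
  proof (cases "below_var t []")
    case True
    then obtain x where "t [] = Some (VarS x)" unfolding below_var_def by auto
    then show ?thesis using subst_var[OF t, of "[]" x \<sigma> "[]"] \<sigma> wf_pterm_root by fastforce
  next
    case False
    then show ?thesis using subst_not_below_var[OF t] wf_pterm_root[OF t] by simp
  qed
next
  fix p i assume child: "subst \<sigma> t (p @ [i]) \<noteq> None"
  show "subst \<sigma> t p \<noteq> None"
  proof (cases "below_var t p")
    case True
    then obtain q1 q2 x where p: "p = q1 @ q2" and x: "t q1 = Some (VarS x)"
      unfolding below_var_def by auto
    have "\<sigma> x (q2 @ [i]) \<noteq> None" using child subst_var[OF t x, of \<sigma> "q2 @ [i]"] p by simp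
    then have "\<sigma> x q2 \<noteq> None" using \<sigma> wf_pterm_parent by metis
    then show ?thesis using subst_var[OF t x] p by simp
  next
    case False
    have "t p \<noteq> None"
    proof (cases "below_var t (p @ [i])")
      case True
      then obtain x where "t (p @ [i]) = Some (VarS x)" using below_var_snocD[OF False] by auto
      then show ?thesis using wf_pterm_parent[OF t] by auto
    next
      case False
      then show ?thesis using child subst_not_below_var[OF t False] wf_pterm_parent[OF t] by auto
    qed
    then show ?thesis using subst_not_below_var[OF t False] by simp
  qed
next
  fix p s i assume ps: "subst \<sigma> t p = Some s"
  show "subst \<sigma> t (p @ [i]) \<noteq> None \<longleftrightarrow> i < arity ar s"
  proof (cases "below_var t p")
    case True
    then obtain q1 q2 x where p: "p = q1 @ q2" and x: "t q1 = Some (VarS x)"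
      unfolding below_var_def by auto
    have "subst \<sigma> t (p @ [i]) = \<sigma> x (q2 @ [i])" using subst_var[OF t x, of \<sigma> "q2 @ [i]"] p by simp
    moreover have "\<sigma> x q2 = Some s" using subst_var[OF t x, of \<sigma> q2] p ps by simp
    ultimately show ?thesis using wf_pterm_child_iff \<sigma> by metis
  next
    case False
    have tp: "t p = Some s" using ps subst_not_below_var[OF t False] by simp
    show ?thesis
    proof (cases "below_var t (p @ [i])")
      case True
      then obtain x where x: "t (p @ [i]) = Some (VarS x)" using below_var_snocD[OF False] by auto
      have "subst \<sigma> t (p @ [i]) = \<sigma> x []" using subst_var[OF t x, of \<sigma> "[]"] by simp
      then have "subst \<sigma> t (p @ [i]) \<noteq> None" using \<sigma> wf_pterm_root by metis
      moreover have "i < arity ar s" using wf_pterm_child_iff[OF t tp, of i] x by simp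
      ultimately show ?thesis by simp
    next
      case False
      then show ?thesis using subst_not_below_var[OF t False] wf_pterm_child_iff[OF t tp] by simp
    qed
  qed
qed

lemma replace_inside: "take (length \<pi>) q = \<pi> \<Longrightarrow> replace t \<pi> s q = s (drop (length \<pi>) q)"
  unfolding replace_def by simp

lemma replace_outside: "take (length \<pi>) q \<noteq> \<pi> \<Longrightarrow> replace t \<pi> s q = t q"
  unfolding replace_def by simp

lemma take_length_snoc_eq:
  "take (length \<pi>) (p @ [i]) = \<pi> \<longleftrightarrow> take (length \<pi>) p = \<pi> \<or> \<pi> = p @ [i]"
  by (metis butlast_snoc length_append_singleton less_Suc_eq linorder_le_less_linear
      not_less_iff_gr_or_eq take_all take_butlast)

lemma drop_length_snoc:
  "take (length \<pi>) p = \<pi> \<Longrightarrow> drop (length \<pi>) (p @ [i]) = drop (length \<pi>) p @ [i]"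
  by (metis drop_append length_take min.bounded_iff nle_le diff_is_0_eq drop0 append_Nil)

lemma wf_pterm_replace:
  assumes t: "wf_pterm ar t" and \<pi>: "t \<pi> \<noteq> None" and s: "wf_pterm ar s"
  shows "wf_pterm ar (replace t \<pi> s)"
proof (rule wf_ptermI)
  show "replace t \<pi> s [] \<noteq> None"
    using t s wf_pterm_root unfolding replace_def by (cases \<pi>) auto
next
  fix p i assume child: "replace t \<pi> s (p @ [i]) \<noteq> None"
  consider (inside) "take (length \<pi>) p = \<pi>" | (at) "\<pi> = p @ [i]"
    | (outside) "take (length \<pi>) (p @ [i]) \<noteq> \<pi>"
    using take_length_snoc_eq[of \<pi> p i] by blast
  then show "replace t \<pi> s p \<noteq> None"
  proof cases
    case inside
    then have "s (drop (length \<pi>) p @ [i]) \<noteq> None"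
      using child take_length_snoc_eq[of \<pi> p i]
      by (simp add: replace_inside drop_length_snoc)
    then show ?thesis using wf_pterm_parent[OF s] inside by (simp add: replace_inside)
  next
    case at
    then have "take (length \<pi>) p \<noteq> \<pi>" by simp
    moreover have "t p \<noteq> None" using at \<pi> wf_pterm_parent[OF t, of p i] by simp
    ultimately show ?thesis by (simp add: replace_outside)
  next
    case outside
    then have "take (length \<pi>) p \<noteq> \<pi>" using take_length_snoc_eq[of \<pi> p i] by blast
    with outside child show ?thesis using wf_pterm_parent[OF t, of p i] by (simp add: replace_outside)
  qed
next
  fix p v i assume pv: "replace t \<pi> s p = Some v"
  show "replace t \<pi> s (p @ [i]) \<noteq> None \<longleftrightarrow> i < arity ar v"
  proof (cases "take (length \<pi>) p = \<pi>")
    case True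
    then have "replace t \<pi> s (p @ [i]) = s (drop (length \<pi>) p @ [i])"
      using take_length_snoc_eq[of \<pi> p i] by (simp add: replace_inside drop_length_snoc)
    moreover have "s (drop (length \<pi>) p) = Some v" using pv True by (simp add: replace_inside)
    ultimately show ?thesis using wf_pterm_child_iff[OF s] by simp
  next
    case False
    then have tp: "t p = Some v" using pv by (simp add: replace_outside)
    show ?thesis
    proof (cases "\<pi> = p @ [i]")
      case True
      then have "replace t \<pi> s (p @ [i]) = s []" using replace_inside[of \<pi> "p @ [i]"] by simp
      then show ?thesis using True \<pi> wf_pterm_child_iff[OF t tp, of i] wf_pterm_root[OF s] by simp
    next
      case False
      with \<open>take (length \<pi>) p \<noteq> \<pi>\<close> have "take (length \<pi>) (p @ [i]) \<noteq> \<pi>"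
        using take_length_snoc_eq[of \<pi> p i] by blast
      then show ?thesis using wf_pterm_child_iff[OF t tp, of i] by (simp add: replace_outside)
    qed
  qed
qed

lemma rstep_wf_pterm: "trs ar R \<Longrightarrow> rstep ar R \<pi> t t' \<Longrightarrow> wf_pterm ar t'"
proof -
  assume R: "trs ar R" and "rstep ar R \<pi> t t'"
  then obtain l r \<sigma> where lr: "(l, r) \<in> R" and \<sigma>: "\<forall>x. wf_pterm ar (\<sigma> x)"
    and t: "wf_pterm ar t" and \<pi>: "t \<pi> \<noteq> None" and t': "t' = replace t \<pi> (subst \<sigma> r)"
    unfolding rstep_def by blast
  have "wf_pterm ar r" using R lr unfolding trs_def wf_term_def by blast
  then show ?thesis using t' wf_pterm_replace[OF t \<pi> wf_pterm_subst[OF _ \<sigma>]] by simp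
qed

section \<open>Redexes of left-linear rules\<close>

lemma lhs_root_FunS:
  assumes "trs ar R" and "(l, r) \<in> R"
  obtains f where "l [] = Some (FunS f)"
proof -
  from assms have "wf_term ar l" and "\<forall>x. l [] \<noteq> Some (VarS x)"
    unfolding trs_def by auto
  moreover obtain v where "l [] = Some v"
    using \<open>wf_term ar l\<close> wf_pterm_root[of ar l] unfolding wf_term_def by blast
  ultimately show ?thesis
    using that unfolding wf_term_def by (cases v) auto
qed

text \<open>Linearity is what allows the substitution to be read off the term: each variable
  of the left-hand side occurs at exactly one position, whose subterm it is mapped to.\<close>
lemma match_left_linear:
  assumes s: "wf_pterm ar s" and l: "wf_term ar l"
    and linear: "\<forall>p q x. l p = Some (VarS x) \<and> l q = Some (VarS x) \<longrightarrow> p = q"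
    and root: "\<forall>x. l [] \<noteq> Some (VarS x)"
    and FunS: "\<And>q f. l q = Some (FunS f) \<Longrightarrow> s q = Some (FunS f)"
  shows "\<exists>\<sigma>. (\<forall>x. wf_pterm ar (\<sigma> x)) \<and> s = subst \<sigma> l"
proof -
  have l': "wf_pterm ar l" using l by (rule wf_term_imp_wf_pterm)
  have no_bot: "\<forall>p. l p \<noteq> Some BotS" using l unfolding wf_term_def by blast
  define \<sigma> where "\<sigma> x = (if \<exists>q. l q = Some (VarS x)
      then subterm s (SOME q. l q = Some (VarS x)) else bot_term)" for x
  have var_defined: "s q \<noteq> None" if x: "l q = Some (VarS x)" for q x
  proof -
    have "q \<noteq> []" using root x by auto
    then obtain q0 j where q: "q = q0 @ [j]" by (metis rev_exhaust)
    obtain f where f: "l q0 = Some (FunS f)" "j < ar f"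
      using wf_pterm_FunS_above[OF l', of q0 j "[]"] x q by auto
    then show ?thesis using wf_pterm_child_iff[OF s FunS[OF f(1)], of j] q by simp
  qed
  have var_pos: "(SOME q. l q = Some (VarS x)) = q" if "l q = Some (VarS x)" for q x
    using someI[of "\<lambda>q. l q = Some (VarS x)", OF that] linear that by blast
  have \<sigma>_wf: "\<forall>x. wf_pterm ar (\<sigma> x)"
  proof
    fix x
    show "wf_pterm ar (\<sigma> x)"
    proof (cases "\<exists>q. l q = Some (VarS x)")
      case True
      then obtain q where q: "l q = Some (VarS x)" by blast
      then show ?thesis
        unfolding \<sigma>_def using var_pos[OF q] wf_pterm_subterm[OF s var_defined[OF q]] by auto
    qed (simp add: \<sigma>_def wf_pterm_bot_term)
  qed
  have not_below_var: "s q = l q" if "\<not> below_var l q" for q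
    using that
  proof (induction q rule: rev_induct)
    case Nil
    obtain v where v: "l [] = Some v" using wf_pterm_root[OF l'] by blast
    with root no_bot obtain f where "v = FunS f" by (cases v) auto
    with v show ?case using FunS by simp
  next
    case (snoc i q)
    have IH: "s q = l q" using snoc below_var_snoc by blast
    show ?case
    proof (cases "l (q @ [i])")
      case (Some v)
      have "\<forall>x. v \<noteq> VarS x" using snoc.prems Some unfolding below_var_def by (metis append_Nil2)
      with no_bot Some obtain f where "v = FunS f" by (cases v) auto
      with Some show ?thesis using FunS by simp
    next
      case None
      show ?thesis
      proof (cases "l q")
        case None
        with IH None show ?thesis using wf_pterm_parent[OF s, of q i] \<open>l (q @ [i]) = None\<close> by fastforce
      next
        case (Some w)
        then show ?thesis using wf_pterm_child_iff[OF s, of q w i] wf_pterm_child_iff[OF l' Some, of i]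
            IH None by auto
      qed
    qed
  qed
  have "s = subst \<sigma> l"
  proof
    fix q
    show "s q = subst \<sigma> l q"
    proof (cases "below_var l q")
      case True
      then obtain q1 q2 x where q: "q = q1 @ q2" and x: "l q1 = Some (VarS x)"
        unfolding below_var_def by auto
      then show ?thesis
        using subst_var[OF l' x] var_pos[OF x] unfolding \<sigma>_def by (auto simp: subterm_def)
    next
      case False
      then show ?thesis using subst_not_below_var[OF l' False] not_below_var by simp
    qed
  qed
  with \<sigma>_wf show ?thesis by blast
qed

lemma redex_at_if_lhs_FunS:
  assumes R: "trs ar R" and linear: "left_linear R" and lr: "(l, r) \<in> R" and t: "wf_pterm ar t"
    and FunS: "\<And>q f. l q = Some (FunS f) \<Longrightarrow> t (\<pi> @ q) = Some (FunS f)"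
  shows "redex_at ar R \<pi> t"
proof -
  obtain f where "l [] = Some (FunS f)" using lhs_root_FunS[OF R lr] .
  then have \<pi>: "t \<pi> \<noteq> None" using FunS[of "[]"] by simp
  have "wf_term ar l" and "\<forall>x. l [] \<noteq> Some (VarS x)" using R lr unfolding trs_def by auto
  moreover have "\<forall>p q x. l p = Some (VarS x) \<and> l q = Some (VarS x) \<longrightarrow> p = q"
    using linear lr unfolding left_linear_def by blast
  ultimately obtain \<sigma> where "\<forall>x. wf_pterm ar (\<sigma> x)" "subterm t \<pi> = subst \<sigma> l"
    using match_left_linear[OF wf_pterm_subterm[OF t \<pi>]] FunS unfolding subterm_def by blast
  with \<pi> lr show ?thesis unfolding redex_at_def by blast
qed

section \<open>Infima, suprema of chains and limits inferior of partial terms\<close>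

lemma le_bot_antisym: "le_bot a b \<Longrightarrow> le_bot b a \<Longrightarrow> a = b"
  unfolding le_bot_def by (rule ext) (metis option.exhaust)

lemma le_bot_non_bot: "le_bot a b \<Longrightarrow> a p \<noteq> None \<Longrightarrow> a p \<noteq> Some BotS \<Longrightarrow> b p = a p"
  unfolding le_bot_def by auto

lemma le_bot_defined: "le_bot a b \<Longrightarrow> a p \<noteq> None \<Longrightarrow> b p \<noteq> None"
  unfolding le_bot_def by auto

lemma is_glb_unique: "is_glb ar S g \<Longrightarrow> is_glb ar S g' \<Longrightarrow> g = g'"
  unfolding is_glb_def using le_bot_antisym by blast

definition agree_at :: "('f, 'v) pterm set \<Rightarrow> nat list \<Rightarrow> bool" where
  "agree_at S q \<longleftrightarrow> (\<exists>v. \<forall>s\<in>S. s q = Some v)"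

text \<open>The common part of the terms in S, with BotS at the first positions where they disagree.\<close>
definition pterm_Inf :: "('f, 'v) pterm set \<Rightarrow> ('f, 'v) pterm" where
  "pterm_Inf S p = (if (\<forall>k<length p. agree_at S (take k p)) \<and> (\<forall>s\<in>S. s p \<noteq> None)
      then (if agree_at S p then (SOME s. s \<in> S) p else Some BotS) else None)"

lemma agree_at_defined: "agree_at S p \<Longrightarrow> s \<in> S \<Longrightarrow> s p \<noteq> None"
  unfolding agree_at_def by auto

lemma agree_at_eq:
  assumes "agree_at S p" and "s \<in> S" and "s' \<in> S"
  shows "s p = s' p"
proof -
  obtain v where "\<forall>s\<in>S. s p = Some v" using assms(1) unfolding agree_at_def by blast
  then have "s p = Some v" and "s' p = Some v" using assms(2,3) by blast+
  then show ?thesis by simp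
qed

lemma agree_at_prefixes_snoc:
  "(\<forall>k<length (p @ [i]). agree_at S (take k (p @ [i])))
    \<longleftrightarrow> (\<forall>k<length p. agree_at S (take k p)) \<and> agree_at S p"
  using less_Suc_eq by fastforce

lemma pterm_Inf_defined:
  "pterm_Inf S p \<noteq> None \<Longrightarrow> (\<forall>k<length p. agree_at S (take k p)) \<and> (\<forall>s\<in>S. s p \<noteq> None)"
  unfolding pterm_Inf_def by (simp split: if_split_asm)

lemma pterm_Inf_disagree:
  assumes "pterm_Inf S p \<noteq> None" and "\<not> agree_at S p"
  shows "pterm_Inf S p = Some BotS"
  using pterm_Inf_defined[OF assms(1)] assms(2) unfolding pterm_Inf_def by simp

lemma pterm_Inf_agree_at:
  assumes "agree_at S p" and "s \<in> S" and "pterm_Inf S p \<noteq> None"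
  shows "pterm_Inf S p = s p"
proof -
  obtain u where u: "\<forall>s\<in>S. s p = Some u" using assms(1) unfolding agree_at_def by blast
  have "(SOME s. s \<in> S) \<in> S" using assms(2) by (auto simp: some_in_eq)
  then have "(SOME s. s \<in> S) p = Some u" using u by blast
  moreover have "pterm_Inf S p = (SOME s. s \<in> S) p"
    using assms(1) pterm_Inf_defined[OF assms(3)] unfolding pterm_Inf_def by simp
  ultimately show ?thesis using u assms(2) by simp
qed

lemma pterm_Inf_defined_iff:
  assumes "S \<noteq> {}"
  shows "pterm_Inf S p \<noteq> None \<longleftrightarrow> (\<forall>k<length p. agree_at S (take k p)) \<and> (\<forall>s\<in>S. s p \<noteq> None)"
proof
  assume cond: "(\<forall>k<length p. agree_at S (take k p)) \<and> (\<forall>s\<in>S. s p \<noteq> None)"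
  have "(SOME s. s \<in> S) \<in> S" using assms by (simp add: some_in_eq)
  with cond have "(SOME s. s \<in> S) p \<noteq> None" by blast
  with cond show "pterm_Inf S p \<noteq> None" unfolding pterm_Inf_def by simp
qed (rule pterm_Inf_defined)

lemma wf_pterm_Inf:
  assumes S: "S \<noteq> {}" and wf: "\<forall>s\<in>S. wf_pterm ar s"
  shows "wf_pterm ar (pterm_Inf S)"
proof (rule wf_ptermI)
  show "pterm_Inf S [] \<noteq> None"
    unfolding pterm_Inf_defined_iff[OF S] using wf wf_pterm_root by auto
next
  fix p i
  have child: "pterm_Inf S (p @ [i]) \<noteq> None \<longleftrightarrow>
      pterm_Inf S p \<noteq> None \<and> agree_at S p \<and> (\<forall>s\<in>S. s (p @ [i]) \<noteq> None)"
    unfolding pterm_Inf_defined_iff[OF S] agree_at_prefixes_snoc using agree_at_defined by blast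
  then show "pterm_Inf S (p @ [i]) \<noteq> None \<Longrightarrow> pterm_Inf S p \<noteq> None" by blast
  fix v assume pv: "pterm_Inf S p = Some v"
  show "pterm_Inf S (p @ [i]) \<noteq> None \<longleftrightarrow> i < arity ar v"
  proof (cases "agree_at S p")
    case True
    obtain s0 where s0: "s0 \<in> S" using S by blast
    then have "s0 p = Some v" using pterm_Inf_agree_at[OF True s0] pv by simp
    then have "s p = Some v" if "s \<in> S" for s
      using agree_at_eq[OF True that s0] by simp
    then have "s (p @ [i]) \<noteq> None \<longleftrightarrow> i < arity ar v" if "s \<in> S" for s
      using wf wf_pterm_child_iff that by blast
    then show ?thesis using child True pv s0 by blast
  next
    case False
    then have "v = BotS" using pterm_Inf_disagree pv by fastforce
    then show ?thesis using child False by simp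
  qed
qed

lemma pterm_Inf_lower: "s \<in> S \<Longrightarrow> le_bot (pterm_Inf S) s"
  unfolding le_bot_def
proof (intro allI impI)
  fix p assume s: "s \<in> S" and defined: "pterm_Inf S p \<noteq> None"
  show "pterm_Inf S p = Some BotS \<and> s p \<noteq> None \<or> pterm_Inf S p = s p"
  proof (cases "agree_at S p")
    case True
    then show ?thesis using pterm_Inf_agree_at[OF True s defined] by blast
  next
    case False
    then show ?thesis using pterm_Inf_disagree[OF defined False] pterm_Inf_defined[OF defined] s
      by blast
  qed
qed

lemma pterm_Inf_greatest:
  assumes S: "S \<noteq> {}" and h: "wf_pterm ar h" and lower: "\<forall>s\<in>S. le_bot h s"
  shows "le_bot h (pterm_Inf S)"
  unfolding le_bot_def
proof (intro allI impI)
  fix p assume hp: "h p \<noteq> None"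
  have agree: "\<forall>k<length p. agree_at S (take k p)"
  proof (intro allI impI)
    fix k assume "k < length p"
    then have "p = take k p @ p ! k # drop (Suc k) p" by (rule id_take_nth_drop)
    then obtain f where "h (take k p) = Some (FunS f)"
      using wf_pterm_FunS_above[OF h, of "take k p" "p ! k" "drop (Suc k) p"] hp by auto
    then show "agree_at S (take k p)"
      using lower le_bot_non_bot[of h _ "take k p"] unfolding agree_at_def by fastforce
  qed
  have defined: "\<forall>s\<in>S. s p \<noteq> None" using lower hp le_bot_defined by blast
  have some: "(SOME s. s \<in> S) \<in> S" using S by (simp add: some_in_eq)
  show "h p = Some BotS \<and> pterm_Inf S p \<noteq> None \<or> h p = pterm_Inf S p"
  proof (cases "h p = Some BotS")
    case True
    then show ?thesis using agree defined some unfolding pterm_Inf_def by auto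
  next
    case False
    then have "\<forall>s\<in>S. s p = h p" using lower hp le_bot_non_bot by blast
    moreover then have "agree_at S p" using hp unfolding agree_at_def by fastforce
    ultimately show ?thesis using agree defined some unfolding pterm_Inf_def by auto
  qed
qed

lemma is_glb_pterm_Inf: "S \<noteq> {} \<Longrightarrow> \<forall>s\<in>S. wf_pterm ar s \<Longrightarrow> is_glb ar S (pterm_Inf S)"
  unfolding is_glb_def
  using wf_pterm_Inf[of S ar] pterm_Inf_lower[of _ S] pterm_Inf_greatest[of S ar] by auto

lemma pterm_Inf_non_bot:
  assumes "pterm_Inf S p = Some v" and "v \<noteq> BotS" and "s \<in> S"
  shows "s p = Some v"
proof -
  have "agree_at S p" using assms(1,2) unfolding pterm_Inf_def by (auto split: if_splits)
  then show ?thesis using pterm_Inf_agree_at[of S p s] assms by simp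
qed

text \<open>On an increasing chain every position is eventually constant; the supremum takes
  these eventual values.\<close>
definition pterm_chain_Sup :: "(nat \<Rightarrow> ('f, 'v) pterm) \<Rightarrow> ('f, 'v) pterm" where
  "pterm_chain_Sup g p = g (SOME N. \<forall>n\<ge>N. g n p = g N p) p"

lemma chain_eventually_const:
  assumes chain: "monotone (\<le>) le_bot g"
  shows "\<exists>N. \<forall>n\<ge>N. g n p = g N p"
proof (cases "\<exists>n v. g n p = Some v \<and> v \<noteq> BotS")
  case True
  then obtain n v where "g n p = Some v" "v \<noteq> BotS" by blast
  then have "\<forall>m\<ge>n. g m p = g n p" using monotoneD[OF chain] le_bot_non_bot[of "g n" _ p] by simp
  then show ?thesis by blast
next
  case no_symbol: False
  show ?thesis
  proof (cases "\<exists>n. g n p = Some BotS")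
    case True
    then obtain n where n: "g n p = Some BotS" by blast
    have "g m p = g n p" if "n \<le> m" for m
      using monotoneD[OF chain that] le_bot_defined[of "g n" _ p] n no_symbol by fastforce
    then show ?thesis by blast
  next
    case False
    then have "\<forall>m. g m p = None" using no_symbol by (metis option.exhaust)
    then show ?thesis by simp
  qed
qed

lemma pterm_chain_Sup_eventually:
  assumes "monotone (\<le>) le_bot g"
  shows "\<exists>N. \<forall>n\<ge>N. g n p = pterm_chain_Sup g p"
proof -
  let ?N = "SOME N. \<forall>n\<ge>N. g n p = g N p"
  have "\<forall>n\<ge>?N. g n p = g ?N p"
    using chain_eventually_const[OF assms] by (rule someI_ex)
  then show ?thesis unfolding pterm_chain_Sup_def by blast
qed

lemma pterm_chain_Sup_eventually2:
  assumes "monotone (\<le>) le_bot g"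
  shows "\<exists>N. \<forall>n\<ge>N. g n p = pterm_chain_Sup g p \<and> g n q = pterm_chain_Sup g q"
proof -
  obtain N1 where "\<forall>n\<ge>N1. g n p = pterm_chain_Sup g p"
    using pterm_chain_Sup_eventually[OF assms] by blast
  moreover obtain N2 where "\<forall>n\<ge>N2. g n q = pterm_chain_Sup g q"
    using pterm_chain_Sup_eventually[OF assms] by blast
  ultimately show ?thesis by (intro exI[of _ "max N1 N2"]) auto
qed

lemma is_lub_pterm_chain_Sup:
  assumes chain: "monotone (\<le>) le_bot g" and wf: "\<And>i. wf_pterm ar (g i)"
  shows "is_lub ar (range g) (pterm_chain_Sup g)"
  unfolding is_lub_def
proof (intro conjI ballI allI impI)
  show "wf_pterm ar (pterm_chain_Sup g)"
  proof (rule wf_ptermI)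
    obtain N where "\<forall>n\<ge>N. g n [] = pterm_chain_Sup g []"
      using pterm_chain_Sup_eventually[OF chain] by blast
    then show "pterm_chain_Sup g [] \<noteq> None" using wf_pterm_root[OF wf, of N] by simp
  next
    fix p i
    obtain N where "\<forall>n\<ge>N. g n p = pterm_chain_Sup g p \<and> g n (p @ [i]) = pterm_chain_Sup g (p @ [i])"
      using pterm_chain_Sup_eventually2[OF chain] by blast
    then have eq: "g N p = pterm_chain_Sup g p" "g N (p @ [i]) = pterm_chain_Sup g (p @ [i])"
      by auto
    then show "pterm_chain_Sup g (p @ [i]) \<noteq> None \<Longrightarrow> pterm_chain_Sup g p \<noteq> None"
      using wf_pterm_parent[OF wf, of N p i] by simp
    fix v assume "pterm_chain_Sup g p = Some v"
    then show "pterm_chain_Sup g (p @ [i]) \<noteq> None \<longleftrightarrow> i < arity ar v"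
      using eq wf_pterm_child_iff[OF wf, of N p v i] by simp
  qed
next
  fix s assume "s \<in> range g"
  then obtain n where s: "s = g n" by blast
  show "le_bot s (pterm_chain_Sup g)"
    unfolding le_bot_def s
  proof (intro allI impI)
    fix p assume "g n p \<noteq> None"
    moreover obtain N where "\<forall>m\<ge>N. g m p = pterm_chain_Sup g p"
      using pterm_chain_Sup_eventually[OF chain] by blast
    moreover have "le_bot (g n) (g (max n N))" using monotoneD[OF chain] by simp
    ultimately show "g n p = Some BotS \<and> pterm_chain_Sup g p \<noteq> None \<or> g n p = pterm_chain_Sup g p"
      unfolding le_bot_def by (metis max.cobounded2)
  qed
next
  fix h assume "wf_pterm ar h \<and> (\<forall>s\<in>range g. le_bot s h)"
  then have upper: "\<And>n. le_bot (g n) h" by blast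
  show "le_bot (pterm_chain_Sup g) h"
    unfolding le_bot_def
  proof (intro allI impI)
    fix p
    obtain N where "\<forall>m\<ge>N. g m p = pterm_chain_Sup g p"
      using pterm_chain_Sup_eventually[OF chain] by blast
    then have "g N p = pterm_chain_Sup g p" by simp
    moreover assume "pterm_chain_Sup g p \<noteq> None"
    ultimately show "pterm_chain_Sup g p = Some BotS \<and> h p \<noteq> None \<or> pterm_chain_Sup g p = h p"
      using upper[of N] unfolding le_bot_def by metis
  qed
qed

lemma pterm_chain_Sup_value: "pterm_chain_Sup g p = Some v \<Longrightarrow> \<exists>n. g n p = Some v"
  unfolding pterm_chain_Sup_def by blast

definition pterm_liminf :: "(nat \<Rightarrow> ('f, 'v) pterm) \<Rightarrow> ('f, 'v) pterm" where
  "pterm_liminf c = pterm_chain_Sup (\<lambda>\<beta>. pterm_Inf (c ` {\<beta>..}))"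

lemma is_liminf_pterm_liminf:
  assumes wf: "\<And>i. wf_pterm ar (c i)"
  shows "is_liminf ar natLeq c UNIV (pterm_liminf c)"
proof -
  define G where "G \<beta> = pterm_Inf (c ` {\<beta>..})" for \<beta>
  have glb: "is_glb ar (c ` {\<beta>..}) (G \<beta>)" for \<beta>
    unfolding G_def using wf by (intro is_glb_pterm_Inf) auto
  have "monotone (\<le>) le_bot G"
  proof (rule monotoneI)
    fix i j :: nat assume "i \<le> j"
    then have "\<forall>s\<in>c ` {j..}. le_bot (G i) s"
      unfolding G_def by (auto intro: pterm_Inf_lower)
    then show "le_bot (G i) (G j)" using glb[of i] glb[of j] unfolding is_glb_def by blast
  qed
  moreover have "wf_pterm ar (G i)" for i using glb[of i] unfolding is_glb_def by blast
  ultimately have lub: "is_lub ar (range G) (pterm_liminf c)"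
    unfolding pterm_liminf_def G_def[symmetric] by (rule is_lub_pterm_chain_Sup)
  have "{\<iota> \<in> UNIV. (\<beta>, \<iota>) \<in> natLeq} = {\<beta>..}" for \<beta>
    unfolding natLeq_def by auto
  moreover have "is_glb ar (c ` {\<beta>..}) g \<longleftrightarrow> g = G \<beta>" for \<beta> g
    using glb is_glb_unique by blast
  ultimately have "{g. \<exists>\<beta>\<in>UNIV. is_glb ar (c ` {\<iota> \<in> UNIV. (\<beta>, \<iota>) \<in> natLeq}) g} = range G"
    by auto
  with lub show ?thesis unfolding is_liminf_def by simp
qed

lemma pterm_liminf_non_bot:
  assumes "pterm_liminf c p = Some v" and "v \<noteq> BotS"
  shows "\<forall>\<^sub>F i in sequentially. c i p = Some v"
proof -
  obtain \<beta> where "pterm_Inf (c ` {\<beta>..}) p = Some v"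
    using pterm_chain_Sup_value assms(1) unfolding pterm_liminf_def by blast
  then have "\<forall>i\<ge>\<beta>. c i p = Some v" using pterm_Inf_non_bot assms(2) by fastforce
  then show ?thesis unfolding eventually_sequentially by blast
qed

lemma wf_pterm_rstep_source: "rstep ar R \<pi> t t' \<Longrightarrow> wf_pterm ar t"
  unfolding rstep_def by blast

lemma wf_pterm_rstep_context: "rstep ar R \<pi> t t' \<Longrightarrow> wf_pterm ar (replace t \<pi> bot_term)"
  unfolding rstep_def using wf_pterm_replace wf_pterm_bot_term by blast

lemma wsucc_natLeq_on: "wsucc (natLeq_on n) i j \<longleftrightarrow> j = Suc i \<and> j < n"
proof
  assume "wsucc (natLeq_on n) i j"
  then have ij: "(i, j) \<in> natLeq_on n" "i \<noteq> j"
    and no_between: "\<not> (\<exists>k. (i, k) \<in> natLeq_on n \<and> (k, j) \<in> natLeq_on n \<and> k \<noteq> i \<and> k \<noteq> j)"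
    unfolding wsucc_def by blast+
  have "j = Suc i"
  proof (rule ccontr)
    assume "j \<noteq> Suc i"
    with ij have "(i, Suc i) \<in> natLeq_on n \<and> (Suc i, j) \<in> natLeq_on n \<and> Suc i \<noteq> i \<and> Suc i \<noteq> j"
      by auto
    with no_between show False by blast
  qed
  with ij show "j = Suc i \<and> j < n" by auto
qed (auto simp: wsucc_def)

lemma wsucc_natLeq: "wsucc natLeq i j \<longleftrightarrow> j = Suc i"
proof
  assume "wsucc natLeq i j"
  then have ij: "(i, j) \<in> natLeq" "i \<noteq> j"
    and no_between: "\<not> (\<exists>k. (i, k) \<in> natLeq \<and> (k, j) \<in> natLeq \<and> k \<noteq> i \<and> k \<noteq> j)"
    unfolding wsucc_def by blast+
  show "j = Suc i"
  proof (rule ccontr)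
    assume "j \<noteq> Suc i"
    with ij have "(i, Suc i) \<in> natLeq \<and> (Suc i, j) \<in> natLeq \<and> Suc i \<noteq> i \<and> Suc i \<noteq> j"
      unfolding natLeq_def by auto
    with no_between show False by blast
  qed
qed (auto simp: wsucc_def natLeq_def)

lemma not_wlimit_natLeq_on: "\<not> wlimit (natLeq_on n) l"
proof
  assume limit: "wlimit (natLeq_on n) l"
  then obtain j where "(j, l) \<in> natLeq_on n" "j \<noteq> l" unfolding wlimit_def by blast
  then have "wsucc (natLeq_on n) (l - 1) l" unfolding wsucc_natLeq_on by auto
  with limit show False unfolding wlimit_def by blast
qed

lemma not_wlimit_natLeq: "\<not> wlimit natLeq l"
proof
  assume limit: "wlimit natLeq l"
  then obtain j where "(j, l) \<in> natLeq" "j \<noteq> l" unfolding wlimit_def by blast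
  then have "l = Suc (l - 1)" unfolding natLeq_def by auto
  then have "wsucc natLeq (l - 1) l" unfolding wsucc_natLeq by simp
  with limit show False unfolding wlimit_def by blast
qed

lemma strongly_p_converges_natLeq_on:
  assumes steps: "\<And>k. k < n \<Longrightarrow> rstep ar R (ps k) (ts k) (ts (Suc k))"
  shows "strongly_p_converges ar R (natLeq_on n) ts ps (ts 0) (ts n)"
  unfolding strongly_p_converges_def Let_def Field_natLeq_on
proof (intro conjI ballI impI)
  show "well_order_on {x. x < n} (natLeq_on n)"
    using natLeq_on_Well_order[of n] unfolding Field_natLeq_on .
next
  assume "{x. x < n} = {}"
  then show "ts n = ts 0" by auto
next
  fix i assume "\<forall>j\<in>{x. x < n}. (i, j) \<in> natLeq_on n" and "i \<in> {x. x < n}"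
  then have "(i, 0) \<in> natLeq_on n" by auto
  then show "ts i = ts 0" by simp
next
  fix i j assume "wsucc (natLeq_on n) i j"
  then show "rstep ar R (ps i) (ts i) (ts j)" using steps unfolding wsucc_natLeq_on by auto
next
  fix i assume i: "i \<in> {x. x < n}" and last: "\<forall>j\<in>{x. x < n}. (j, i) \<in> natLeq_on n"
  then have "(n - 1, i) \<in> natLeq_on n" by auto
  with i have "Suc i = n" by auto
  then show "rstep ar R (ps i) (ts i) (ts n)" using steps by auto
next
  fix l assume "wlimit (natLeq_on n) l"
  then show "is_liminf ar (natLeq_on n) (\<lambda>i. replace (ts i) (ps i) bot_term)
      {i \<in> {x. x < n}. (i, l) \<in> natLeq_on n \<and> i \<noteq> l} (ts l)"
    using not_wlimit_natLeq_on by blast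
next
  assume open_end: "{x. x < n} \<noteq> {} \<and> \<not> (\<exists>m\<in>{x. x < n}. \<forall>j\<in>{x. x < n}. (j, m) \<in> natLeq_on n)"
  then have "n - 1 \<in> {x. x < n}" and "\<forall>j\<in>{x. x < n}. (j, n - 1) \<in> natLeq_on n" by auto
  with open_end have False by blast
  then show "is_liminf ar (natLeq_on n) (\<lambda>i. replace (ts i) (ps i) bot_term) {x. x < n} (ts n)" ..
qed

lemma strongly_p_converges_natLeq:
  assumes steps: "\<And>k. rstep ar R (ps k) (ts k) (ts (Suc k))"
  shows "strongly_p_converges ar R natLeq ts ps (ts 0)
    (pterm_liminf (\<lambda>i. replace (ts i) (ps i) bot_term))"
  unfolding strongly_p_converges_def Let_def Field_natLeq
proof (intro conjI ballI impI)
  show "well_order natLeq" using natLeq_Well_order unfolding Field_natLeq .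
next
  fix i assume "\<forall>j\<in>UNIV. (i, j) \<in> natLeq"
  then have "(i, 0) \<in> natLeq" by blast
  then show "ts i = ts 0" unfolding natLeq_def by simp
next
  fix i j assume "wsucc natLeq i j"
  then show "rstep ar R (ps i) (ts i) (ts j)" using steps unfolding wsucc_natLeq by simp
next
  fix i assume "\<forall>j\<in>UNIV. (j, i) \<in> natLeq"
  then have "(Suc i, i) \<in> natLeq" by blast
  then show "rstep ar R (ps i) (ts i) (pterm_liminf (\<lambda>i. replace (ts i) (ps i) bot_term))"
    unfolding natLeq_def by simp
next
  fix l assume "wlimit natLeq l"
  then show "is_liminf ar natLeq (\<lambda>i. replace (ts i) (ps i) bot_term)
      {i \<in> UNIV. (i, l) \<in> natLeq \<and> i \<noteq> l} (ts l)"
    using not_wlimit_natLeq by blast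
next
  show "is_liminf ar natLeq (\<lambda>i. replace (ts i) (ps i) bot_term) UNIV
      (pterm_liminf (\<lambda>i. replace (ts i) (ps i) bot_term))"
    by (rule is_liminf_pterm_liminf) (rule wf_pterm_rstep_context[OF steps])
qed (simp add: Field_natLeq)

section \<open>Fair reductions\<close>

lemma normal_form_pterm_liminf_if_fair:
  assumes R: "trs ar R" and linear: "left_linear R" and finite: "left_finite R"
    and steps: "\<And>i. rstep ar R (ps i) (ts i) (ts (Suc i))"
    and fair: "\<And>\<pi> N. \<exists>m\<ge>N. redex_at ar R \<pi> (ts m) \<longrightarrow> ps m = \<pi>"
  shows "normal_form ar R (pterm_liminf (\<lambda>i. replace (ts i) (ps i) bot_term))"
proof -
  define c where "c i = replace (ts i) (ps i) bot_term" for i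
  have "is_liminf ar natLeq c UNIV (pterm_liminf c)"
    unfolding c_def by (rule is_liminf_pterm_liminf) (rule wf_pterm_rstep_context[OF steps])
  then have wf_lim: "wf_pterm ar (pterm_liminf c)"
    unfolding is_liminf_def is_lub_def by blast
  have no_redex: "\<not> redex_at ar R \<pi> (pterm_liminf c)" for \<pi>
  proof
    assume "redex_at ar R \<pi> (pterm_liminf c)"
    then obtain l r \<sigma> where lr: "(l, r) \<in> R" and match: "subterm (pterm_liminf c) \<pi> = subst \<sigma> l"
      unfolding redex_at_def by blast
    have l: "wf_pterm ar l" using R lr unfolding trs_def wf_term_def by blast
    define F where "F = {q. \<exists>f. l q = Some (FunS f)}"
    have "finite {p. l p \<noteq> None}" using finite lr unfolding left_finite_def by blast
    then have "finite F" unfolding F_def by (rule rev_finite_subset) auto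
    have lim_FunS: "pterm_liminf c (\<pi> @ q) = Some (FunS f)" if "l q = Some (FunS f)" for q f
    proof -
      have "pterm_liminf c (\<pi> @ q) = subst \<sigma> l q"
        using fun_cong[OF match, of q] unfolding subterm_def .
      then show ?thesis using subst_FunS[OF l that] by simp
    qed
    have stable: "\<forall>\<^sub>F i in sequentially. c i (\<pi> @ q) = pterm_liminf c (\<pi> @ q)"
      if q: "q \<in> F" for q
    proof -
      obtain f where f: "l q = Some (FunS f)" using q unfolding F_def by blast
      have "\<forall>\<^sub>F i in sequentially. c i (\<pi> @ q) = Some (FunS f)"
        by (rule pterm_liminf_non_bot[OF lim_FunS[OF f]]) simp
      with lim_FunS[OF f] show ?thesis by simp
    qed
    have "\<forall>\<^sub>F i in sequentially. \<forall>q\<in>F. c i (\<pi> @ q) = pterm_liminf c (\<pi> @ q)"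
      by (rule eventually_ball_finite[OF \<open>finite F\<close>]) (use stable in blast)
    then obtain N where N: "\<And>i q. i \<ge> N \<Longrightarrow> q \<in> F \<Longrightarrow> c i (\<pi> @ q) = pterm_liminf c (\<pi> @ q)"
      unfolding eventually_sequentially by blast
    have c_FunS: "c i (\<pi> @ q) = Some (FunS f)" if "i \<ge> N" "l q = Some (FunS f)" for i q f
      using N[OF that(1)] lim_FunS[OF that(2)] that(2) unfolding F_def by auto
    obtain m where "m \<ge> N" and m: "redex_at ar R \<pi> (ts m) \<longrightarrow> ps m = \<pi>"
      using fair by blast
    have "ts m (\<pi> @ q) = Some (FunS f)" if "l q = Some (FunS f)" for q f
      using c_FunS[OF \<open>m \<ge> N\<close> that] unfolding c_def replace_def bot_term_def
      by (auto split: if_splits)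
    then have "ps m = \<pi>"
      using m redex_at_if_lhs_FunS[OF R linear lr wf_pterm_rstep_source[OF steps]] by blast
    then have "c m \<pi> = Some BotS" unfolding c_def replace_def bot_term_def by simp
    moreover obtain f where "l [] = Some (FunS f)" using lhs_root_FunS[OF R lr] .
    ultimately show False using c_FunS[OF \<open>m \<ge> N\<close>] by fastforce
  qed
  show ?thesis unfolding normal_form_def c_def[symmetric] using wf_lim no_redex by blast
qed

definition pos_enum :: "nat \<Rightarrow> nat list" where
  "pos_enum m = list_decode (fst (prod_decode m))"

lemma pos_enum_frequently: "\<exists>m\<ge>N. pos_enum m = \<pi>"
  by (rule exI[of _ "prod_encode (list_encode \<pi>, N)"]) (simp add: pos_enum_def le_prod_encode_2)

text \<open>Step n contracts the first redex enumerated at an index at least n; since every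
  position is enumerated infinitely often, this strategy is fair.\<close>
definition fair_redex :: "('f \<Rightarrow> nat) \<Rightarrow> ('f, 'v) trs \<Rightarrow> ('f, 'v) pterm \<Rightarrow> nat \<Rightarrow> nat list" where
  "fair_redex ar R t n = pos_enum (LEAST k. n \<le> k \<and> redex_at ar R (pos_enum k) t)"

primrec fair_reduct :: "('f \<Rightarrow> nat) \<Rightarrow> ('f, 'v) trs \<Rightarrow> ('f, 'v) pterm \<Rightarrow> nat \<Rightarrow> ('f, 'v) pterm" where
  "fair_reduct ar R t 0 = t"
| "fair_reduct ar R t (Suc n) =
    (SOME t'. rstep ar R (fair_redex ar R (fair_reduct ar R t n) n) (fair_reduct ar R t n) t')"

lemma rstep_if_redex_at: "wf_pterm ar t \<Longrightarrow> redex_at ar R \<pi> t \<Longrightarrow> \<exists>t'. rstep ar R \<pi> t t'"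
  unfolding redex_at_def rstep_def by blast

lemma redex_at_fair_redex:
  assumes "wf_pterm ar t" and "\<not> normal_form ar R t"
  shows "redex_at ar R (fair_redex ar R t n) t"
proof -
  obtain \<pi> where "redex_at ar R \<pi> t" using assms unfolding normal_form_def by blast
  moreover obtain m where "m \<ge> n" "pos_enum m = \<pi>" using pos_enum_frequently by blast
  ultimately have "\<exists>k. n \<le> k \<and> redex_at ar R (pos_enum k) t" by blast
  then show ?thesis unfolding fair_redex_def by (rule LeastI2_ex) blast
qed

lemma fair_redex_eq:
  assumes "redex_at ar R (pos_enum n) t"
  shows "fair_redex ar R t n = pos_enum n"
proof -
  have "(LEAST k. n \<le> k \<and> redex_at ar R (pos_enum k) t) = n"
    by (rule Least_equality) (use assms in simp_all)
  then show ?thesis unfolding fair_redex_def by simp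
qed

lemma rstep_fair_reduct:
  assumes "wf_pterm ar (fair_reduct ar R t n)" and "\<not> normal_form ar R (fair_reduct ar R t n)"
  shows "rstep ar R (fair_redex ar R (fair_reduct ar R t n) n) (fair_reduct ar R t n)
    (fair_reduct ar R t (Suc n))"
proof -
  have "\<exists>t'. rstep ar R (fair_redex ar R (fair_reduct ar R t n) n) (fair_reduct ar R t n) t'"
    using rstep_if_redex_at[OF assms(1) redex_at_fair_redex[OF assms]] .
  then show ?thesis unfolding fair_reduct.simps(2) by (rule someI_ex)
qed

lemma rstep_fair_reduct_before_normal_form:
  assumes R: "trs ar R" and t: "wf_pterm ar t"
    and not_normal: "\<And>k. k \<le> n \<Longrightarrow> \<not> normal_form ar R (fair_reduct ar R t k)"
  shows "rstep ar R (fair_redex ar R (fair_reduct ar R t n) n) (fair_reduct ar R t n)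
    (fair_reduct ar R t (Suc n))"
  using not_normal
proof (induction n)
  case 0
  then show ?case using rstep_fair_reduct[of ar R t 0] t by simp
next
  case (Suc n)
  then have "rstep ar R (fair_redex ar R (fair_reduct ar R t n) n) (fair_reduct ar R t n)
      (fair_reduct ar R t (Suc n))"
    by simp
  then have "wf_pterm ar (fair_reduct ar R t (Suc n))" by (rule rstep_wf_pterm[OF R])
  then show ?case using rstep_fair_reduct Suc.prems[of "Suc n"] by blast
qed

theorem theorem6p14:
  fixes ar :: "'f \<Rightarrow> nat" and R :: "('f, 'v) trs" and t :: "('f, 'v) pterm"
  assumes "trs ar R" and "orthogonal ar R" and "left_finite R" and "wf_pterm ar t"
  shows "\<exists>t'. normal_form ar R t' \<and> strongly_p_reachable ar R t t'"
proof -
  define ts where "ts = fair_reduct ar R t"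
  define ps where "ps n = fair_redex ar R (ts n) n" for n
  have "ts 0 = t" unfolding ts_def by simp
  have steps: "rstep ar R (ps n) (ts n) (ts (Suc n))"
    if "\<And>k. k \<le> n \<Longrightarrow> \<not> normal_form ar R (ts k)" for n
    using rstep_fair_reduct_before_normal_form[OF assms(1,4)] that unfolding ts_def ps_def by blast
  show ?thesis
  proof (cases "\<exists>n. normal_form ar R (ts n)")
    case True
    define n where "n = (LEAST n. normal_form ar R (ts n))"
    have "normal_form ar R (ts n)" unfolding n_def using True by (rule LeastI_ex)
    moreover have not_normal: "\<not> normal_form ar R (ts j)" if "j < n" for j
      using not_less_Least that unfolding n_def by blast
    have "rstep ar R (ps k) (ts k) (ts (Suc k))" if "k < n" for k
      by (rule steps) (use not_normal that in simp)
    then have "strongly_p_converges ar R (natLeq_on n) ts ps (ts 0) (ts n)"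
      by (rule strongly_p_converges_natLeq_on)
    ultimately show ?thesis unfolding strongly_p_reachable_def \<open>ts 0 = t\<close> by blast
  next
    case False
    then have steps: "\<And>n. rstep ar R (ps n) (ts n) (ts (Suc n))" using steps by blast
    have fair: "\<exists>m\<ge>N. redex_at ar R \<pi> (ts m) \<longrightarrow> ps m = \<pi>" for \<pi> N
      using pos_enum_frequently fair_redex_eq unfolding ps_def by metis
    have "left_linear R" using assms(2) unfolding orthogonal_def by blast
    then have "normal_form ar R (pterm_liminf (\<lambda>i. replace (ts i) (ps i) bot_term))"
      using normal_form_pterm_liminf_if_fair[OF assms(1) _ assms(3) steps fair] by blast
    moreover have "strongly_p_converges ar R natLeq ts ps (ts 0)
        (pterm_liminf (\<lambda>i. replace (ts i) (ps i) bot_term))"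
      by (rule strongly_p_converges_natLeq) (rule steps)
    ultimately show ?thesis unfolding strongly_p_reachable_def \<open>ts 0 = t\<close> by blast
  qed
qed

end
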